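(* Let $\breve{\mathcal{X}}_k\subset\mathbb{R}^n$ and $\mathcal{X}^{\rm F}_k\subset\mathbb{R}^n$ be constrained zonotopes and let $\check{\mathcal{X}}_k=\breve{\mathcal{X}}_k\cap_{I_n}\mathcal{X}^{\rm F}_k$. Let $g:\mathbb{R}^n\to\mathbb{R}^{m_c}$, let $\check{\mathcal{P}}_k\supseteq\check{\mathcal{X}}_k$ be a convex polytope, and suppose $g=g^{\rm a}-g^{\rm b}$ on $\check{\mathcal{P}}_k$ where $g^{\rm a},g^{\rm b}$ are differentiable and componentwise convex on $\check{\mathcal{P}}_k$. Let $\bar x\in\check{\mathcal{P}}_k$, $H=\nabla_xg(\bar x)$, and define $\bar g(x)=g(\bar x)+H(x-\bar x)$, $\bar g^{\rm a}(x)=g^{\rm a}(\bar x)+\nabla g^{\rm a}(\bar x)(x-\bar x)$, $\bar g^{\rm b}(x)=g^{\rm b}(\bar x)+\nabla g^{\rm b}(\bar x)(x-\bar x)$. For $i=1,\ldots,m_c$ let $$e^-_i=\min_{x\in\mathrm{vert}(\check{\mathcal{P}}_k)}\big(\bar g^{\rm a}_i(x)-g^{\rm b}_i(x)-\bar g_i(x)\big),\qquad e^+_i=\max_{x\in\mathrm{vert}(\check{\mathcal{P}}_k)}\big(g^{\rm a}_i(x)-\bar g^{\rm b}_i(x)-\bar g_i(x)\big),$$ and let $\mathcal{R}_k$ be the zonotope $\{\mathrm{diag}(\tfrac12(e^+-e^-)),\tfrac12(e^-+e^+)\}$ (the box $[e^-,e^+]$). Define $\mathcal{C}_k=\big(-g(\bar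 x)+H\bar x\big)\oplus(-\mathcal{R}_k)$. Then $$\{x\in\check{\mathcal{X}}_k:\ g(x)=0_{m_c\times1}\}\subseteq\tilde{\mathcal{X}}_k:=\check{\mathcal{X}}_k\cap_H\mathcal{C}_k,$$ and $\tilde{\mathcal{X}}_k$ is a constrained zonotope.
   Context: A constrained zonotope (CZ) is a set $\{G,c,A,b\}=\{G\xi+c:\xi\in[-1,1]^{n_g},\ A\xi=b\}$; a zonotope $\{G,c\}$ has no equality constraints. $\oplus$ is Minkowski sum (vectors treated as singletons), $-\mathcal{X}=\{-x:x\in\mathcal{X}\}$. The generalized intersection is $\mathcal{X}\cap_M\mathcal{W}=\{x\in\mathcal{X}:Mx\in\mathcal{W}\}$; $I_n$ is the $n\times n$ identity. $\mathrm{vert}(\mathcal{P})$ is the vertex set of the polytope $\mathcal{P}$. Vector-valued convexity is componentwise. *)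

theory Defs
  imports "HOL-Analysis.Analysis"
begin

definition cz_set ::
  "('j \<Rightarrow> real^'n) \<Rightarrow> 'j set \<Rightarrow> real^'n \<Rightarrow> ('k \<Rightarrow> 'j \<Rightarrow> real) \<Rightarrow> 'k set \<Rightarrow> ('k \<Rightarrow> real) \<Rightarrow> (real^'n) set"
  where "cz_set G J c A K b =
    {c + (\<Sum>j\<in>J. xi j *\<^sub>R G j) | xi.
       (\<forall>j\<in>J. \<bar>xi j\<bar> \<le> 1) \<and> (\<forall>k\<in>K. (\<Sum>j\<in>J. A k j * xi j) = b k)}"

definition zonotope_set :: "('j \<Rightarrow> real^'n) \<Rightarrow> 'j set \<Rightarrow> real^'n \<Rightarrow> (real^'n) set"
  where "zonotope_set G J c = cz_set G J c (\<lambda>_ _. 0) ({} :: nat set) (\<lambda>_. 0)"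

definition is_CZ :: "(real^'n) set \<Rightarrow> bool"
  where "is_CZ S \<longleftrightarrow> (\<exists>(G :: nat \<Rightarrow> real^'n) J c (A :: nat \<Rightarrow> nat \<Rightarrow> real) K b.
            finite J \<and> finite K \<and> S = cz_set G J c A K b)"

definition gen_inter :: "(real^'n) set \<Rightarrow> real^'n^'m \<Rightarrow> (real^'m) set \<Rightarrow> (real^'n) set"
  where "gen_inter X M W = {x \<in> X. M *v x \<in> W}"

definition msum :: "('a::plus) set \<Rightarrow> 'a set \<Rightarrow> 'a set"
  where "msum A B = {a + b | a b. a \<in> A \<and> b \<in> B}"

definition vert :: "('a::real_vector) set \<Rightarrow> 'a set"
  where "vert P = {v. v extreme_point_of P}"

end

(*
  Each g^a_i and g^b_i is convex, so it lies above its tangent plane at xbar. Hence on P the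
  remainder g_i - gbar_i is bounded below by the concave function gbar^a_i - g^b_i - gbar_i and
  above by the convex function g^a_i - gbar^b_i - gbar_i. A convex function on a polytope attains
  its maximum at a vertex (and a concave one its minimum), so g - gbar takes values in the box
  [e-, e+], which is the zonotope R. At a zero x of g this gives H x in C.
  That the result is a constrained zonotope holds because constrained zonotopes are closed under
  generalized intersection: stack the generators of X and W, keep both sets of equality
  constraints and add the coupling M (c_X + G_X xi_X) = c_W + G_W xi_W.
*)
theory Submission
  imports Defs
begin

lemma cz_set_reindex:
  assumes f: "bij_betw f J' J" and h: "bij_betw h K' K"
  shows "cz_set G J c A K b = cz_set (G \<circ> f) J' c (\<lambda>k j. A (h k) (f j)) K' (b \<circ> h)"
proof
  have sum_f: "(\<Sum>j\<in>J'. u (f j)) = (\<Sum>j\<in>J. u j)" for u :: "_ \<Rightarrow> 'x::comm_monoid_add"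
    by (rule sum.reindex_bij_betw[OF f])
  show "cz_set G J c A K b \<subseteq> cz_set (G \<circ> f) J' c (\<lambda>k j. A (h k) (f j)) K' (b \<circ> h)"
  proof
    fix x assume "x \<in> cz_set G J c A K b"
    then obtain xi where "x = c + (\<Sum>j\<in>J. xi j *\<^sub>R G j)" and "\<forall>j\<in>J. \<bar>xi j\<bar> \<le> 1"
      and "\<forall>k\<in>K. (\<Sum>j\<in>J. A k j * xi j) = b k"
      unfolding cz_set_def by blast
    with f h show "x \<in> cz_set (G \<circ> f) J' c (\<lambda>k j. A (h k) (f j)) K' (b \<circ> h)"
      unfolding cz_set_def sum_f[symmetric]
      by (auto intro!: exI[of _ "xi \<circ> f"] simp: bij_betw_apply)
  qed
  show "cz_set (G \<circ> f) J' c (\<lambda>k j. A (h k) (f j)) K' (b \<circ> h) \<subseteq> cz_set G J c A K b"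
  proof
    fix x assume "x \<in> cz_set (G \<circ> f) J' c (\<lambda>k j. A (h k) (f j)) K' (b \<circ> h)"
    then obtain xi where x: "x = c + (\<Sum>j\<in>J'. xi j *\<^sub>R G (f j))" and bnd: "\<forall>j\<in>J'. \<bar>xi j\<bar> \<le> 1"
      and cons: "\<forall>k\<in>K'. (\<Sum>j\<in>J'. A (h k) (f j) * xi j) = b (h k)"
      unfolding cz_set_def by auto
    define xi' where "xi' = xi \<circ> inv_into J' f"
    have xi': "xi' (f j) = xi j" if "j \<in> J'" for j
      using f that by (simp add: xi'_def bij_betw_def)
    have "x = c + (\<Sum>j\<in>J. xi' j *\<^sub>R G j)"
      unfolding x sum_f[symmetric] by (simp add: xi')
    moreover have "\<forall>j\<in>J. \<bar>xi' j\<bar> \<le> 1"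
      using bnd f by (simp add: xi'_def bij_betw_inv_into_left bij_betw_def inv_into_into)
    moreover have "\<forall>k\<in>K. (\<Sum>j\<in>J. A k j * xi' j) = b k"
      using cons h unfolding sum_f[symmetric] by (auto simp: xi' bij_betw_def)
    ultimately show "x \<in> cz_set G J c A K b"
      unfolding cz_set_def by blast
  qed
qed

lemma is_CZ_cz_set:
  fixes G :: "'j \<Rightarrow> real^'n" and A :: "'k \<Rightarrow> 'j \<Rightarrow> real"
  assumes "finite J" "finite K"
  shows "is_CZ (cz_set G J c A K b)"
proof -
  obtain f :: "nat \<Rightarrow> 'j" where f: "bij_betw f {0..<card J} J"
    using ex_bij_betw_nat_finite[OF \<open>finite J\<close>] by blast
  obtain h :: "nat \<Rightarrow> 'k" where h: "bij_betw h {0..<card K} K"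
    using ex_bij_betw_nat_finite[OF \<open>finite K\<close>] by blast
  show ?thesis
    unfolding is_CZ_def cz_set_reindex[OF f h] by blast
qed

lemma uminus_cz_set: "uminus ` cz_set G J c A K b = cz_set (\<lambda>j. - G j) J (- c) A K b"
  unfolding cz_set_def by (auto simp: sum_negf intro!: image_eqI)

lemma msum_singleton_cz_set: "msum {d} (cz_set G J c A K b) = cz_set G J (d + c) A K b"
  unfolding msum_def cz_set_def by (auto simp: add.assoc)

lemma Ball_Plus: "(\<forall>j\<in>A <+> B. P j) \<longleftrightarrow> (\<forall>a\<in>A. P (Inl a)) \<and> (\<forall>b\<in>B. P (Inr b))"
  by blast

lemma mem_cz_set_Plus:
  assumes "finite J1" "finite J2"
  shows "x \<in> cz_set G (J1 <+> J2) c A K b \<longleftrightarrow>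
    (\<exists>xi1 xi2. x = c + (\<Sum>j\<in>J1. xi1 j *\<^sub>R G (Inl j)) + (\<Sum>j\<in>J2. xi2 j *\<^sub>R G (Inr j))
      \<and> (\<forall>j\<in>J1. \<bar>xi1 j\<bar> \<le> 1) \<and> (\<forall>j\<in>J2. \<bar>xi2 j\<bar> \<le> 1)
      \<and> (\<forall>k\<in>K. (\<Sum>j\<in>J1. A k (Inl j) * xi1 j) + (\<Sum>j\<in>J2. A k (Inr j) * xi2 j) = b k))"
proof -
  have split_fun: "(\<exists>xi. Q xi) \<longleftrightarrow> (\<exists>xi1 xi2. Q (case_sum xi1 xi2))" for Q :: "('a + 'b \<Rightarrow> real) \<Rightarrow> bool"
    by (metis surjective_sum)
  show ?thesis
    unfolding cz_set_def mem_Collect_eq split_fun Ball_Plus using assms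
    by (simp add: sum.Plus add.assoc)
qed

lemma matrix_vector_mult_sum_scaleR:
  fixes M :: "real^'n^'m"
  shows "M *v (\<Sum>j\<in>S. u j *\<^sub>R v j) = (\<Sum>j\<in>S. u j *\<^sub>R (M *v v j))"
  by (simp add: linear_sum[OF matrix_vector_mul_linear] matrix_vector_mult_scaleR)

lemma is_CZ_gen_inter:
  fixes X :: "(real^'n) set" and W :: "(real^'m) set" and M :: "real^'n^'m"
  assumes "is_CZ X" and "is_CZ W"
  shows "is_CZ (gen_inter X M W)"
proof -
  obtain Gx :: "nat \<Rightarrow> real^'n" and Jx cx and Ax :: "nat \<Rightarrow> nat \<Rightarrow> real" and Kx bx
    where fin_x: "finite Jx" "finite Kx" and X: "X = cz_set Gx Jx cx Ax Kx bx"
    using \<open>is_CZ X\<close> unfolding is_CZ_def by blast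
  obtain Gw :: "nat \<Rightarrow> real^'m" and Jw cw and Aw :: "nat \<Rightarrow> nat \<Rightarrow> real" and Kw bw
    where fin_w: "finite Jw" "finite Kw" and W: "W = cz_set Gw Jw cw Aw Kw bw"
    using \<open>is_CZ W\<close> unfolding is_CZ_def by blast
  \<comment> \<open>The generators of \<open>W\<close> enter only through the constraints, so they are zero in \<open>G\<close>;
    besides the constraints of \<open>X\<close> and \<open>W\<close> there is one row per component of the coupling
    equation \<open>M (cx + Gx \<xi>x) = cw + Gw \<xi>w\<close>.\<close>
  define G :: "nat + nat \<Rightarrow> real^'n" where "G = case_sum Gx (\<lambda>_. 0)"
  define A :: "nat + nat + 'm \<Rightarrow> nat + nat \<Rightarrow> real" where
    "A = case_sum (\<lambda>k. case_sum (Ax k) (\<lambda>_. 0))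
           (case_sum (\<lambda>k. case_sum (\<lambda>_. 0) (Aw k))
              (\<lambda>i. case_sum (\<lambda>j. (M *v Gx j) $ i) (\<lambda>j. - Gw j $ i)))"
  define b :: "nat + nat + 'm \<Rightarrow> real" where
    "b = case_sum bx (case_sum bw (\<lambda>i. cw $ i - (M *v cx) $ i))"
  have coupling: "M *v (cx + (\<Sum>j\<in>Jx. xi1 j *\<^sub>R Gx j)) = cw + (\<Sum>j\<in>Jw. xi2 j *\<^sub>R Gw j) \<longleftrightarrow>
      (\<forall>i. (\<Sum>j\<in>Jx. (M *v Gx j) $ i * xi1 j) + (\<Sum>j\<in>Jw. - Gw j $ i * xi2 j) = cw $ i - (M *v cx) $ i)"
    for xi1 xi2
    by (auto simp: vec_eq_iff matrix_vector_right_distrib matrix_vector_mult_sum_scaleR sum_negf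
        mult.commute algebra_simps)
  have "gen_inter X M W = cz_set G (Jx <+> Jw) cx A (Kx <+> Kw <+> UNIV) b"
  proof (rule set_eqI)
    fix x
    have "x \<in> cz_set G (Jx <+> Jw) cx A (Kx <+> Kw <+> UNIV) b \<longleftrightarrow>
      (\<exists>xi1 xi2. x = cx + (\<Sum>j\<in>Jx. xi1 j *\<^sub>R Gx j)
        \<and> (\<forall>j\<in>Jx. \<bar>xi1 j\<bar> \<le> 1) \<and> (\<forall>j\<in>Jw. \<bar>xi2 j\<bar> \<le> 1)
        \<and> (\<forall>k\<in>Kx. (\<Sum>j\<in>Jx. Ax k j * xi1 j) = bx k) \<and> (\<forall>k\<in>Kw. (\<Sum>j\<in>Jw. Aw k j * xi2 j) = bw k)
        \<and> M *v (cx + (\<Sum>j\<in>Jx. xi1 j *\<^sub>R Gx j)) = cw + (\<Sum>j\<in>Jw. xi2 j *\<^sub>R Gw j))"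
      unfolding mem_cz_set_Plus[OF fin_x(1) fin_w(1)] Ball_Plus coupling
      by (simp add: G_def A_def b_def)
    also have "\<dots> \<longleftrightarrow> x \<in> gen_inter X M W"
      unfolding gen_inter_def X W cz_set_def by blast
    finally show "x \<in> gen_inter X M W \<longleftrightarrow> x \<in> cz_set G (Jx <+> Jw) cx A (Kx <+> Kw <+> UNIV) b"
      by (rule sym)
  qed
  then show ?thesis
    using fin_x fin_w by (simp add: is_CZ_cz_set)
qed

lemma cbox_subset_zonotope_set:
  fixes em ep :: "real^'m"
  shows "cbox em ep \<subseteq>
    zonotope_set (\<lambda>j. ((ep $ j - em $ j) / 2) *\<^sub>R axis j 1) UNIV ((1/2) *\<^sub>R (em + ep))"
proof
  fix r assume "r \<in> cbox em ep"
  then have bnd: "em $ j \<le> r $ j \<and> r $ j \<le> ep $ j" for j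
    by (simp add: mem_box_cart)
  define s where "s j = (ep $ j - em $ j) / 2" for j
  define xi where "xi j = (if s j = 0 then 0 else (r $ j - (em $ j + ep $ j) / 2) / s j)" for j
  have "\<bar>xi j\<bar> \<le> 1" for j
    using bnd[of j] by (auto simp: xi_def s_def abs_le_iff field_simps)
  moreover have "r = (1/2) *\<^sub>R (em + ep) + (\<Sum>j\<in>UNIV. xi j *\<^sub>R (s j *\<^sub>R axis j 1))"
    unfolding vec_eq_iff
  proof
    fix i
    have "r $ i = (em $ i + ep $ i) / 2 + xi i * s i"
      using bnd[of i] by (auto simp: xi_def s_def field_simps)
    then show "r $ i = ((1/2) *\<^sub>R (em + ep) + (\<Sum>j\<in>UNIV. xi j *\<^sub>R (s j *\<^sub>R axis j 1))) $ i"
      by (simp add: axis_def if_distrib cong: if_cong)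
  qed
  ultimately show "r \<in> zonotope_set (\<lambda>j. ((ep $ j - em $ j) / 2) *\<^sub>R axis j 1) UNIV ((1/2) *\<^sub>R (em + ep))"
    unfolding zonotope_set_def cz_set_def s_def by blast
qed

lemma convex_on_above_tangent:
  fixes f :: "'a::real_normed_vector \<Rightarrow> real"
  assumes f: "convex_on S f" and x: "x \<in> S" and y: "y \<in> S"
    and D: "(f has_derivative f') (at x within S)"
  shows "f x + f' (y - x) \<le> f y"
proof -
  define line where "line t = x + t *\<^sub>R (y - x)" for t :: real
  define q where "q = f \<circ> line"
  have line_eq: "line t = (1 - t) *\<^sub>R x + t *\<^sub>R y" for t
    by (simp add: line_def algebra_simps)
  have line_Icc: "line ` {0..1} \<subseteq> S"
    using convexD[OF convex_on_imp_convex[OF f] x y] by (auto simp: line_eq)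
  have "(line has_derivative (\<lambda>t. t *\<^sub>R (y - x))) (at 0 within {0..1})"
    unfolding line_def by (auto intro!: derivative_eq_intros)
  moreover have "(f has_derivative f') (at (line 0) within line ` {0..1})"
    using has_derivative_subset[OF D line_Icc] by (simp add: line_def)
  ultimately have "(q has_derivative (\<lambda>t. f' (t *\<^sub>R (y - x)))) (at 0 within {0..1})"
    unfolding q_def o_def by (rule has_derivative_in_compose)
  then have "(q has_real_derivative f' (y - x)) (at 0 within {0..1})"
    using linear.scaleR[OF has_derivative_linear[OF D]]
    by (simp add: has_field_derivative_def mult_commute_abs)
  then have slope_lim: "((\<lambda>t. (q t - q 0) / t) \<longlongrightarrow> f' (y - x)) (at_right 0)"
    by (simp add: has_field_derivative_iff at_within_Icc_at_right)
  have "(q t - q 0) / t \<le> q 1 - q 0" if "0 < t" "t < 1" for t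
  proof -
    have "q t \<le> (1 - t) * q 0 + t * q 1"
      using convex_onD[OF f, of t x y] that x y by (simp add: q_def line_eq)
    then have "q t - q 0 \<le> t * (q 1 - q 0)" by (simp add: algebra_simps)
    then show ?thesis using that by (simp add: pos_divide_le_eq mult.commute)
  qed
  then have "eventually (\<lambda>t. (q t - q 0) / t \<le> q 1 - q 0) (at_right 0)"
    using eventually_at_right_real[of 0 1] by (auto elim: eventually_mono)
  then have "f' (y - x) \<le> q 1 - q 0"
    by (rule tendsto_upperbound[OF slope_lim]) simp
  then show ?thesis by (simp add: q_def line_def)
qed

lemma
  fixes L :: "'a::real_vector \<Rightarrow> real"
  assumes L: "linear L" and S: "convex S"
  shows convex_on_affine: "convex_on S (\<lambda>x. c + L (x - z))"
    and concave_on_affine: "concave_on S (\<lambda>x. c + L (x - z))"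
proof -
  have "c + L ((u *\<^sub>R x + v *\<^sub>R y) - z) = u * (c + L (x - z)) + v * (c + L (y - z))"
    if "u + v = 1" for u v x y
  proof -
    have "(u *\<^sub>R x + v *\<^sub>R y) - z = u *\<^sub>R (x - z) + v *\<^sub>R (y - z)"
      using that by (simp add: algebra_simps flip: scaleR_add_left)
    then have "L ((u *\<^sub>R x + v *\<^sub>R y) - z) = u * L (x - z) + v * L (y - z)"
      by (simp add: linear_add[OF L] linear_scale[OF L])
    moreover have "c = u * c + v * c"
      using that by (metis distrib_right mult_1)
    ultimately show ?thesis
      by (simp add: distrib_left)
  qed
  then show "convex_on S (\<lambda>x. c + L (x - z))" "concave_on S (\<lambda>x. c + L (x - z))"
    using S by (simp_all add: convex_on_def concave_on_iff)
qed

lemma finite_vert_polytope: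
  fixes P :: "'a::euclidean_space set"
  shows "polytope P \<Longrightarrow> finite (vert P)"
  unfolding vert_def by (simp add: finite_polyhedron_extreme_points polytope_imp_polyhedron)

lemma polytope_eq_convex_hull_vert:
  fixes P :: "'a::euclidean_space set"
  shows "polytope P \<Longrightarrow> P = convex hull (vert P)"
  unfolding vert_def
  by (rule Krein_Milman_Minkowski) (simp_all add: polytope_imp_compact polytope_imp_convex)

lemma convex_on_polytope_le_Max_vert:
  fixes P :: "'a::euclidean_space set"
  assumes P: "polytope P" and f: "convex_on P f" and x: "x \<in> P"
  shows "f x \<le> Max (f ` vert P)"
  using convex_on_convex_hull_bound[of "vert P" f "Max (f ` vert P)"]
    f x finite_vert_polytope[OF P] polytope_eq_convex_hull_vert[OF P] by auto

lemma concave_on_polytope_Min_vert_le: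
  fixes P :: "'a::euclidean_space set"
  assumes P: "polytope P" and f: "concave_on P f" and x: "x \<in> P"
  shows "Min (f ` vert P) \<le> f x"
  using convex_on_convex_hull_bound[of "vert P" "\<lambda>x. - f x" "- Min (f ` vert P)"]
    f x finite_vert_polytope[OF P] polytope_eq_convex_hull_vert[OF P]
  by (auto simp: concave_on_def)

lemma dc_linearization_error_bounds:
  fixes fa fb L :: "'a::euclidean_space \<Rightarrow> real"
  assumes P: "polytope P" and fa: "convex_on P fa" and fb: "convex_on P fb"
    and x0: "x0 \<in> P" and x: "x \<in> P"
    and Da: "(fa has_derivative Da) (at x0 within P)"
    and Db: "(fb has_derivative Db) (at x0 within P)"
    and L: "linear L"
  shows "Min ((\<lambda>v. fa x0 + Da (v - x0) - fb v - (c + L (v - x0))) ` vert P)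
           \<le> fa x - fb x - (c + L (x - x0))"
    and "fa x - fb x - (c + L (x - x0))
           \<le> Max ((\<lambda>v. fa v - (fb x0 + Db (v - x0)) - (c + L (v - x0))) ` vert P)"
proof -
  have cP: "convex P" using P polytope_imp_convex by blast
  have lin: "linear (\<lambda>w. Da w - L w)" "linear (\<lambda>w. Db w + L w)"
    using has_derivative_linear[OF Da] has_derivative_linear[OF Db] L
    by (simp_all add: linear_compose_sub linear_compose_add)
  have "concave_on P (\<lambda>v. fa x0 + Da (v - x0) - fb v - (c + L (v - x0)))"
    using concave_on_diff[OF concave_on_affine[OF lin(1) cP, of "fa x0 - c" x0] fb]
    by (simp add: algebra_simps)
  from concave_on_polytope_Min_vert_le[OF P this x]
  show "Min ((\<lambda>v. fa x0 + Da (v - x0) - fb v - (c + L (v - x0))) ` vert P)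
      \<le> fa x - fb x - (c + L (x - x0))"
    using convex_on_above_tangent[OF fa x0 x Da] by linarith
  have "convex_on P (\<lambda>v. fa v - (fb x0 + Db (v - x0)) - (c + L (v - x0)))"
    using convex_on_diff[OF fa concave_on_affine[OF lin(2) cP, of "fb x0 + c" x0]]
    by (simp add: algebra_simps)
  from convex_on_polytope_le_Max_vert[OF P this x]
  show "fa x - fb x - (c + L (x - x0))
      \<le> Max ((\<lambda>v. fa v - (fb x0 + Db (v - x0)) - (c + L (v - x0))) ` vert P)"
    using convex_on_above_tangent[OF fb x0 x Db] by linarith
qed

lemma dc_linearization_error_in_cbox:
  fixes fa fb :: "real^'n \<Rightarrow> real^'m" and H Ja Jb :: "real^'n^'m"
  assumes P: "polytope P"
    and fa: "\<forall>i. convex_on P (\<lambda>x. fa x $ i)" and fb: "\<forall>i. convex_on P (\<lambda>x. fb x $ i)"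
    and x0: "x0 \<in> P" and x: "x \<in> P"
    and Ja: "(fa has_derivative (\<lambda>y. Ja *v y)) (at x0)"
    and Jb: "(fb has_derivative (\<lambda>y. Jb *v y)) (at x0)"
  shows "fa x - fb x - (c + H *v (x - x0)) \<in> cbox
    (\<chi> i. Min ((\<lambda>v. (fa x0 + Ja *v (v - x0)) $ i - fb v $ i - (c + H *v (v - x0)) $ i) ` vert P))
    (\<chi> i. Max ((\<lambda>v. fa v $ i - (fb x0 + Jb *v (v - x0)) $ i - (c + H *v (v - x0)) $ i) ` vert P))"
proof -
  have row_derivative: "((\<lambda>x. F x $ i) has_derivative (\<lambda>y. (J *v y) $ i)) (at x0 within P)"
    if "(F has_derivative (\<lambda>y. J *v y)) (at x0)" for F :: "real^'n \<Rightarrow> real^'m" and J i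
    using has_derivative_at_withinI[OF bounded_linear.has_derivative[OF bounded_linear_vec_nth that]] .
  have linear_row: "linear (\<lambda>y. (H *v y) $ i)" for i
    by (intro bounded_linear.linear bounded_linear_compose[OF bounded_linear_vec_nth]) simp
  show ?thesis
    using dc_linearization_error_bounds[OF P spec[OF fa] spec[OF fb] x0 x
        row_derivative[OF Ja] row_derivative[OF Jb] linear_row]
    by (simp add: mem_box_cart)
qed

theorem corollary1:
  fixes Xb XF P :: "(real^'n) set"
    and g ga gb :: "real^'n \<Rightarrow> real^'m"
    and xbar :: "real^'n"
    and H Ja Jb :: "real^'n^'m"
  assumes Xb: "is_CZ Xb"
    and XF: "is_CZ XF"
    and P_poly: "polytope P"
    and P_sup: "gen_inter Xb (mat 1) XF \<subseteq> P"
    and g_dc: "\<forall>x\<in>P. g x = ga x - gb x"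
    and ga_diff: "\<forall>x\<in>P. ga differentiable (at x)"
    and gb_diff: "\<forall>x\<in>P. gb differentiable (at x)"
    and ga_conv: "\<forall>i. convex_on P (\<lambda>x. ga x $ i)"
    and gb_conv: "\<forall>i. convex_on P (\<lambda>x. gb x $ i)"
    and xbar: "xbar \<in> P"
    and H: "(g has_derivative (\<lambda>y. H *v y)) (at xbar)"
    and Ja: "(ga has_derivative (\<lambda>y. Ja *v y)) (at xbar)"
    and Jb: "(gb has_derivative (\<lambda>y. Jb *v y)) (at xbar)"
  shows "let Xc = gen_inter Xb (mat 1) XF;
             gbar = (\<lambda>x. g xbar + H *v (x - xbar));
             gabar = (\<lambda>x. ga xbar + Ja *v (x - xbar));
             gbbar = (\<lambda>x. gb xbar + Jb *v (x - xbar));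
             em = (\<chi> i. Min ((\<lambda>x. gabar x $ i - gb x $ i - gbar x $ i) ` vert P));
             ep = (\<chi> i. Max ((\<lambda>x. ga x $ i - gbbar x $ i - gbar x $ i) ` vert P));
             R = zonotope_set (\<lambda>j. ((ep $ j - em $ j) / 2) *\<^sub>R axis j 1) (UNIV :: 'm set)
                   ((1/2) *\<^sub>R (em + ep));
             C = msum {- g xbar + H *v xbar} (uminus ` R);
             Xt = gen_inter Xc H C
         in {x \<in> Xc. g x = 0} \<subseteq> Xt \<and> is_CZ Xt"
proof -
  define Xc where "Xc = gen_inter Xb (mat 1) XF"
  define gbar where "gbar = (\<lambda>x. g xbar + H *v (x - xbar))"
  define em where "em = (\<chi> i. Min ((\<lambda>x. (ga xbar + Ja *v (x - xbar)) $ i - gb x $ i - gbar x $ i) ` vert P))"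
  define ep where "ep = (\<chi> i. Max ((\<lambda>x. ga x $ i - (gb xbar + Jb *v (x - xbar)) $ i - gbar x $ i) ` vert P))"
  define R where "R = zonotope_set (\<lambda>j. ((ep $ j - em $ j) / 2) *\<^sub>R axis j 1) (UNIV :: 'm set)
                   ((1/2) *\<^sub>R (em + ep))"
  define C where "C = msum {- g xbar + H *v xbar} (uminus ` R)"
  have remainder_in_box: "g x - gbar x \<in> cbox em ep" if "x \<in> P" for x
    using dc_linearization_error_in_cbox[OF P_poly ga_conv gb_conv xbar that Ja Jb, of "g xbar" H]
      g_dc that by (simp add: em_def ep_def gbar_def)
  have "H *v x \<in> C" if "x \<in> Xc" "g x = 0" for x
  proof -
    have "x \<in> P" using that P_sup by (auto simp: Xc_def)
    have "(- g xbar + H *v xbar) - H *v x = g x - gbar x"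
      using \<open>g x = 0\<close> by (simp add: gbar_def matrix_vector_mult_diff_distrib)
    also have "\<dots> \<in> R"
      using remainder_in_box[OF \<open>x \<in> P\<close>] cbox_subset_zonotope_set unfolding R_def by blast
    finally have "(- g xbar + H *v xbar) - H *v x \<in> R" .
    moreover have "H *v x = (- g xbar + H *v xbar) + - ((- g xbar + H *v xbar) - H *v x)"
      by simp
    ultimately show ?thesis
      unfolding C_def msum_def by blast
  qed
  then have "{x \<in> Xc. g x = 0} \<subseteq> gen_inter Xc H C"
    by (auto simp: gen_inter_def)
  moreover have "is_CZ C"
    by (simp add: C_def R_def zonotope_set_def uminus_cz_set msum_singleton_cz_set is_CZ_cz_set)
  then have "is_CZ (gen_inter Xc H C)"
    unfolding Xc_def by (intro is_CZ_gen_inter Xb XF)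
  ultimately show ?thesis
    by (simp only: Let_def Xc_def C_def R_def ep_def em_def gbar_def)
qed

end
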